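(* Let $A$ and $Y$ be Hopf algebras and $\rho:Y\to A\otimes Y$ a linear map. Then $\rho$ makes $Y$ a partial $A$-comodule coalgebra in the Hopf-algebraic sense if and only if it makes $Y$ a partial $A$-comodule coalgebra in the multiplier-Hopf-algebraic sense (both defined below).
   Context: Hopf-algebraic sense: (i) $(\varepsilon_A\otimes\imath_Y)\rho=\imath_Y$; (ii) $(\imath_A\otimes\Delta_Y)\rho=(m_A\otimes\imath_Y\otimes\imath_Y)(\imath_A\otimes\tau_{Y,A}\otimes\imath_Y)(\rho\otimes\rho)\Delta_Y$; (iii) $(\imath_A\otimes\rho)\rho=(m_A\otimes\imath_A\otimes\imath_Y)\{(\imath_A\otimes\varepsilon_Y)\rho\otimes[(\Delta_A\otimes\imath_Y)\rho]\}\Delta_Y$, where $m_A$ is multiplication and $\tau_{Y,A}(y\otimes a)=a\otimes y$. Multiplier-Hopf-algebraic sense (with $M(A\otimes Y)=A\otimes Y$ here): put $T:Y\otimes A\to A\otimes Y$, $T(y\otimes a)=\rho(y)(a\otimes1)$. Then: (i) $(\varepsilon_A\otimes\imath_Y)\rho(y)=y$; (ii) $((\imath_Y\otimes T)(\Delta_Y(y)\otimes a))(1\otimes1\otimes y')$ and $(1\otimes1\otimes y')((\imath_Y\otimes T)(\Delta_Y(y)\otimes a))$ lie in $Y\otimes A\otimes Y$; (iii) $(\imath_A\otimes\Delta_Y)T=(T\otimes\imath_Y)(\imath_Y\otimes T)(\Delta_Y\otimes\imath_A)$; (iv) $(\imath_A\otimes T)(T\otimes\imath_A)(\imath_Y\otimes\Delta_A)=((\imath_A\otimes\varepsilon_Y)T\otimes\imath_A\otimes\imath_Y)(\imath_Y\otimes(\Delta_A\otimes\imath_Y)T)(\Delta_Y\otimes\imath_A)$,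 for all $y,y'\in Y$, $a\in A$. *)

theory Defs
  imports Main "HOL-Library.Poly_Mapping"
begin

(* A vector space over the field 'k is modelled as the free vector space
   'b \<Rightarrow>\<^sub>0 'k on a basis 'b (every vector space has a basis).
   The tensor product of the spaces with bases 'a and 'b is the free space on 'a \<times> 'b;
   iterated tensor products are right-nested: A\<otimes>B\<otimes>C has basis 'a \<times> ('b \<times> 'c). *)

definition smult :: "'k::field \<Rightarrow> ('b \<Rightarrow>\<^sub>0 'k) \<Rightarrow> ('b \<Rightarrow>\<^sub>0 'k)" where
  "smult c v = Poly_Mapping.map (\<lambda>x. c * x) v"

definition bas :: "'b \<Rightarrow> ('b \<Rightarrow>\<^sub>0 'k::field)" where
  "bas i = Poly_Mapping.single i 1"

definition lin :: "('a \<Rightarrow> ('b \<Rightarrow>\<^sub>0 'k::field)) \<Rightarrow> ('a \<Rightarrow>\<^sub>0 'k) \<Rightarrow> ('b \<Rightarrow>\<^sub>0 'k)" where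
  "lin f v = (\<Sum>i\<in>Poly_Mapping.keys v. smult (Poly_Mapping.lookup v i) (f i))"

definition klinear :: "(('a \<Rightarrow>\<^sub>0 'k::field) \<Rightarrow> ('b \<Rightarrow>\<^sub>0 'k)) \<Rightarrow> bool" where
  "klinear f \<longleftrightarrow> (\<forall>v w. f (v + w) = f v + f w) \<and> (\<forall>c v. f (smult c v) = smult c (f v))"

definition kfunctional :: "(('a \<Rightarrow>\<^sub>0 'k::field) \<Rightarrow> 'k) \<Rightarrow> bool" where
  "kfunctional f \<longleftrightarrow> (\<forall>v w. f (v + w) = f v + f w) \<and> (\<forall>c v. f (smult c v) = c * f v)"

definition tens :: "('a \<Rightarrow>\<^sub>0 'k::field) \<Rightarrow> ('b \<Rightarrow>\<^sub>0 'k) \<Rightarrow> ('a \<times> 'b \<Rightarrow>\<^sub>0 'k)" where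
  "tens v w = (\<Sum>i\<in>Poly_Mapping.keys v. \<Sum>j\<in>Poly_Mapping.keys w. Poly_Mapping.single (i, j) (Poly_Mapping.lookup v i * Poly_Mapping.lookup w j))"

definition tmap :: "(('a \<Rightarrow>\<^sub>0 'k::field) \<Rightarrow> ('c \<Rightarrow>\<^sub>0 'k)) \<Rightarrow> (('b \<Rightarrow>\<^sub>0 'k) \<Rightarrow> ('d \<Rightarrow>\<^sub>0 'k))
    \<Rightarrow> ('a \<times> 'b \<Rightarrow>\<^sub>0 'k) \<Rightarrow> ('c \<times> 'd \<Rightarrow>\<^sub>0 'k)" where
  "tmap f g = lin (\<lambda>(i, j). tens (f (bas i)) (g (bas j)))"

(* f \<otimes> e for e a linear functional, with B \<otimes> k identified with B *)
definition tmap_r :: "(('a \<Rightarrow>\<^sub>0 'k::field) \<Rightarrow> ('c \<Rightarrow>\<^sub>0 'k)) \<Rightarrow> (('b \<Rightarrow>\<^sub>0 'k) \<Rightarrow> 'k)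
    \<Rightarrow> ('a \<times> 'b \<Rightarrow>\<^sub>0 'k) \<Rightarrow> ('c \<Rightarrow>\<^sub>0 'k)" where
  "tmap_r f e = lin (\<lambda>(i, j). smult (e (bas j)) (f (bas i)))"

(* e \<otimes> g for e a linear functional, with k \<otimes> B identified with B *)
definition tmap_l :: "(('a \<Rightarrow>\<^sub>0 'k::field) \<Rightarrow> 'k) \<Rightarrow> (('b \<Rightarrow>\<^sub>0 'k) \<Rightarrow> ('d \<Rightarrow>\<^sub>0 'k))
    \<Rightarrow> ('a \<times> 'b \<Rightarrow>\<^sub>0 'k) \<Rightarrow> ('d \<Rightarrow>\<^sub>0 'k)" where
  "tmap_l e g = lin (\<lambda>(i, j). smult (e (bas i)) (g (bas j)))"

definition relabel :: "('a \<Rightarrow> 'b) \<Rightarrow> ('a \<Rightarrow>\<^sub>0 'k::field) \<Rightarrow> ('b \<Rightarrow>\<^sub>0 'k)" where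
  "relabel \<sigma> = lin (\<lambda>b. bas (\<sigma> b))"

definition assoc_r :: "(('a \<times> 'b) \<times> 'c \<Rightarrow>\<^sub>0 'k::field) \<Rightarrow> ('a \<times> ('b \<times> 'c) \<Rightarrow>\<^sub>0 'k)" where
  "assoc_r = relabel (\<lambda>((a, b), c). (a, (b, c)))"

definition assoc_l :: "('a \<times> ('b \<times> 'c) \<Rightarrow>\<^sub>0 'k::field) \<Rightarrow> (('a \<times> 'b) \<times> 'c \<Rightarrow>\<^sub>0 'k)" where
  "assoc_l = relabel (\<lambda>(a, (b, c)). ((a, b), c))"

(* Hopf algebra over 'k: multiplication m, unit element u (unit map c \<mapsto> c u),
   comultiplication D, counit e, antipode S *)
definition hopf_algebra ::
  "(('a \<times> 'a \<Rightarrow>\<^sub>0 'k::field) \<Rightarrow> ('a \<Rightarrow>\<^sub>0 'k)) \<Rightarrow> ('a \<Rightarrow>\<^sub>0 'k) \<Rightarrow> (('a \<Rightarrow>\<^sub>0 'k) \<Rightarrow> ('a \<times> 'a \<Rightarrow>\<^sub>0 'k))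
    \<Rightarrow> (('a \<Rightarrow>\<^sub>0 'k) \<Rightarrow> 'k) \<Rightarrow> (('a \<Rightarrow>\<^sub>0 'k) \<Rightarrow> ('a \<Rightarrow>\<^sub>0 'k)) \<Rightarrow> bool" where
  "hopf_algebra m u D e S \<longleftrightarrow>
     klinear m \<and> klinear D \<and> kfunctional e \<and> klinear S \<and>
     (\<forall>x. m (tmap m id x) = m (tmap id m (assoc_r x))) \<and>
     (\<forall>v. m (tens u v) = v \<and> m (tens v u) = v) \<and>
     (\<forall>v. tmap id D (D v) = assoc_r (tmap D id (D v))) \<and>
     (\<forall>v. tmap_l e id (D v) = v \<and> tmap_r id e (D v) = v) \<and>
     (\<forall>v w. D (m (tens v w)) =
        tmap m m (relabel (\<lambda>((a, b), (c, d)). ((a, c), (b, d))) (tens (D v) (D w)))) \<and>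
     D u = tens u u \<and>
     (\<forall>v w. e (m (tens v w)) = e v * e w) \<and> e u = 1 \<and>
     (\<forall>v. m (tmap S id (D v)) = smult (e v) u \<and> m (tmap id S (D v)) = smult (e v) u)"

definition partial_comodule_coalgebra_hopf ::
  "(('a \<times> 'a \<Rightarrow>\<^sub>0 'k::field) \<Rightarrow> ('a \<Rightarrow>\<^sub>0 'k)) \<Rightarrow> (('a \<Rightarrow>\<^sub>0 'k) \<Rightarrow> ('a \<times> 'a \<Rightarrow>\<^sub>0 'k))
    \<Rightarrow> (('a \<Rightarrow>\<^sub>0 'k) \<Rightarrow> 'k)
    \<Rightarrow> (('y \<Rightarrow>\<^sub>0 'k) \<Rightarrow> ('y \<times> 'y \<Rightarrow>\<^sub>0 'k)) \<Rightarrow> (('y \<Rightarrow>\<^sub>0 'k) \<Rightarrow> 'k)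
    \<Rightarrow> (('y \<Rightarrow>\<^sub>0 'k) \<Rightarrow> ('a \<times> 'y \<Rightarrow>\<^sub>0 'k)) \<Rightarrow> bool" where
  "partial_comodule_coalgebra_hopf mA DA eA DY eY \<rho> \<longleftrightarrow>
     (\<forall>y. tmap_l eA id (\<rho> y) = y) \<and>
     (\<forall>y. tmap id DY (\<rho> y) =
        tmap mA id (relabel (\<lambda>((a, y), (a', y')). ((a, a'), (y, y'))) (tmap \<rho> \<rho> (DY y)))) \<and>
     (\<forall>y. tmap id \<rho> (\<rho> y) =
        tmap mA id (assoc_l
          (tmap (\<lambda>v. tmap_r id eY (\<rho> v)) (\<lambda>v. assoc_r (tmap DA id (\<rho> v))) (DY y))))"

definition mult_AY ::
  "(('a \<times> 'a \<Rightarrow>\<^sub>0 'k::field) \<Rightarrow> ('a \<Rightarrow>\<^sub>0 'k)) \<Rightarrow> (('y \<times> 'y \<Rightarrow>\<^sub>0 'k) \<Rightarrow> ('y \<Rightarrow>\<^sub>0 'k))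
    \<Rightarrow> ('a \<times> 'y \<Rightarrow>\<^sub>0 'k) \<Rightarrow> ('a \<times> 'y \<Rightarrow>\<^sub>0 'k) \<Rightarrow> ('a \<times> 'y \<Rightarrow>\<^sub>0 'k)" where
  "mult_AY mA mY v w = tmap mA mY (relabel (\<lambda>((a, y), (a', y')). ((a, a'), (y, y'))) (tens v w))"

definition mult_YAY ::
  "(('a \<times> 'a \<Rightarrow>\<^sub>0 'k::field) \<Rightarrow> ('a \<Rightarrow>\<^sub>0 'k)) \<Rightarrow> (('y \<times> 'y \<Rightarrow>\<^sub>0 'k) \<Rightarrow> ('y \<Rightarrow>\<^sub>0 'k))
    \<Rightarrow> ('y \<times> 'a \<times> 'y \<Rightarrow>\<^sub>0 'k) \<Rightarrow> ('y \<times> 'a \<times> 'y \<Rightarrow>\<^sub>0 'k) \<Rightarrow> ('y \<times> 'a \<times> 'y \<Rightarrow>\<^sub>0 'k)" where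
  "mult_YAY mA mY v w = tmap mY (tmap mA mY)
     (relabel (\<lambda>((y, a, z), (y', a', z')). ((y, y'), ((a, a'), (z, z')))) (tens v w))"

(* T : Y \<otimes> A \<rightarrow> A \<otimes> Y,  T(y \<otimes> a) = \<rho>(y)(a \<otimes> 1), extended linearly *)
definition Tmap ::
  "(('a \<times> 'a \<Rightarrow>\<^sub>0 'k::field) \<Rightarrow> ('a \<Rightarrow>\<^sub>0 'k)) \<Rightarrow> (('y \<times> 'y \<Rightarrow>\<^sub>0 'k) \<Rightarrow> ('y \<Rightarrow>\<^sub>0 'k)) \<Rightarrow> ('y \<Rightarrow>\<^sub>0 'k)
    \<Rightarrow> (('y \<Rightarrow>\<^sub>0 'k) \<Rightarrow> ('a \<times> 'y \<Rightarrow>\<^sub>0 'k)) \<Rightarrow> ('y \<times> 'a \<Rightarrow>\<^sub>0 'k) \<Rightarrow> ('a \<times> 'y \<Rightarrow>\<^sub>0 'k)" where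
  "Tmap mA mY uY \<rho> = lin (\<lambda>(j, i). mult_AY mA mY (\<rho> (bas j)) (tens (bas i) uY))"

(* Partial A-comodule coalgebra in the multiplier-Hopf-algebraic sense (M(A\<otimes>Y) = A\<otimes>Y) *)
definition partial_comodule_coalgebra_mult ::
  "(('a \<times> 'a \<Rightarrow>\<^sub>0 'k::field) \<Rightarrow> ('a \<Rightarrow>\<^sub>0 'k)) \<Rightarrow> ('a \<Rightarrow>\<^sub>0 'k) \<Rightarrow> (('a \<Rightarrow>\<^sub>0 'k) \<Rightarrow> ('a \<times> 'a \<Rightarrow>\<^sub>0 'k))
    \<Rightarrow> (('a \<Rightarrow>\<^sub>0 'k) \<Rightarrow> 'k)
    \<Rightarrow> (('y \<times> 'y \<Rightarrow>\<^sub>0 'k) \<Rightarrow> ('y \<Rightarrow>\<^sub>0 'k)) \<Rightarrow> ('y \<Rightarrow>\<^sub>0 'k)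
    \<Rightarrow> (('y \<Rightarrow>\<^sub>0 'k) \<Rightarrow> ('y \<times> 'y \<Rightarrow>\<^sub>0 'k)) \<Rightarrow> (('y \<Rightarrow>\<^sub>0 'k) \<Rightarrow> 'k)
    \<Rightarrow> (('y \<Rightarrow>\<^sub>0 'k) \<Rightarrow> ('a \<times> 'y \<Rightarrow>\<^sub>0 'k)) \<Rightarrow> bool" where
  "partial_comodule_coalgebra_mult mA uA DA eA mY uY DY eY \<rho> \<longleftrightarrow>
     (let T = Tmap mA mY uY \<rho> in
     (\<forall>y. tmap_l eA id (\<rho> y) = y) \<and>
     (\<forall>y y' a.
        mult_YAY mA mY (tmap id T (assoc_r (tens (DY y) a))) (tens uY (tens uA y'))
          \<in> (UNIV :: ('y \<times> 'a \<times> 'y \<Rightarrow>\<^sub>0 'k) set) \<and>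
        mult_YAY mA mY (tens uY (tens uA y')) (tmap id T (assoc_r (tens (DY y) a)))
          \<in> (UNIV :: ('y \<times> 'a \<times> 'y \<Rightarrow>\<^sub>0 'k) set)) \<and>
     (\<forall>x. tmap id DY (T x) =
        assoc_r (tmap T id (assoc_l (tmap id T (assoc_r (tmap DY id x)))))) \<and>
     (\<forall>x. tmap id T (assoc_r (tmap T id (assoc_l (tmap id DA x)))) =
        tmap (\<lambda>v. tmap_r id eY (T v)) id
          (assoc_l (tmap id (\<lambda>v. assoc_r (tmap DA id (T v))) (assoc_r (tmap DY id x))))))"

end

theory Submission
  imports Defs
begin

text \<open>
  Let \<open>R\<^sub>a\<close> denote right multiplication by \<open>a\<close> in \<open>A\<close>. Then \<open>T (y \<otimes> a) = (R\<^sub>a \<otimes> id) (\<rho> y)\<close>,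
  so \<open>T (y \<otimes> 1) = \<rho> y\<close> and \<open>T\<close> intertwines \<open>id \<otimes> R\<^sub>a\<close> with \<open>R\<^sub>a \<otimes> id\<close>. Consequently both sides of
  condition (iii), resp. (iv), of the multiplier-Hopf-algebraic definition, evaluated at
  \<open>y \<otimes> a\<close>, arise from their values at \<open>y \<otimes> 1\<close> by right multiplication with \<open>a\<close> on the
  first leg, resp. with \<open>\<Delta>(a)\<close> on the first two legs (here multiplicativity of \<open>\<Delta>\<^sub>A\<close> enters).
  At \<open>y \<otimes> 1\<close> they are exactly the two sides of conditions (ii), resp. (iii), of the
  Hopf-algebraic definition, and a linear map on \<open>Y \<otimes> A\<close> is determined by its values on
  elementary tensors. Condition (i) is common to both definitions, and condition (ii) of the
  multiplier version is vacuous because \<open>M(A \<otimes> Y) = A \<otimes> Y\<close>.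
\<close>

section \<open>Linear maps between free vector spaces\<close>

lemma lookup_smult [simp]: "Poly_Mapping.lookup (smult c v) i = c * Poly_Mapping.lookup v i"
  by (simp add: smult_def Poly_Mapping.map.rep_eq when_def)

lemma smult_zero [simp]: "smult c 0 = 0" "smult 0 v = 0"
  by (rule poly_mapping_eqI, simp)+

lemma smult_one [simp]: "smult 1 v = v"
  by (rule poly_mapping_eqI) simp

lemma smult_add: "smult c (v + w) = smult c v + smult c w"
  by (rule poly_mapping_eqI) (simp add: lookup_add algebra_simps)

lemma smult_add_scalar: "smult (c + d) v = smult c v + smult d v"
  by (rule poly_mapping_eqI) (simp add: lookup_add algebra_simps)

lemma smult_smult [simp]: "smult c (smult d v) = smult (c * d) v"
  by (rule poly_mapping_eqI) simp

lemma smult_sum: "smult c (sum f S) = (\<Sum>i\<in>S. smult c (f i))"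
  by (rule poly_mapping_eqI) (simp add: lookup_sum sum_distrib_left)

lemma lookup_bas: "Poly_Mapping.lookup (bas i) j = (if i = j then 1 else 0)"
  by (simp add: bas_def lookup_single when_def)

lemma keys_bas [simp]: "Poly_Mapping.keys (bas i :: 'b \<Rightarrow>\<^sub>0 'k::field) = {i}"
  by (simp add: bas_def)

lemma lin_superset:
  assumes "finite S" "Poly_Mapping.keys v \<subseteq> S"
  shows "lin f v = (\<Sum>i\<in>S. smult (Poly_Mapping.lookup v i) (f i))"
  unfolding lin_def by (rule sum.mono_neutral_left) (use assms in \<open>auto simp: in_keys_iff\<close>)

lemma lin_add: "lin f (v + w) = lin f v + lin f w"
proof -
  let ?S = "Poly_Mapping.keys v \<union> Poly_Mapping.keys w"
  have "Poly_Mapping.keys (v + w) \<subseteq> ?S" by (rule keys_add)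
  then show ?thesis
    by (simp add: lin_superset[of ?S] lookup_add smult_add_scalar sum.distrib)
qed

lemma lin_smult: "lin f (smult c v) = smult c (lin f v)"
proof -
  have "Poly_Mapping.keys (smult c v) \<subseteq> Poly_Mapping.keys v"
    by (auto simp: in_keys_iff)
  then show ?thesis
    by (simp add: lin_superset[of "Poly_Mapping.keys v"] smult_sum)
qed

lemma lin_bas [simp]: "lin f (bas i) = f i"
  by (simp add: lin_def lookup_bas)

lemma lin_fun_add: "lin (\<lambda>i. f i + g i) v = lin f v + lin g v"
  by (simp add: lin_def smult_add sum.distrib)

lemma lin_fun_smult: "lin (\<lambda>i. smult c (f i)) v = smult c (lin f v)"
  by (simp add: lin_def smult_sum mult.commute)

lemma klinear_lin [simp]: "klinear (lin f)"
  by (simp add: klinear_def lin_add lin_smult)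

lemma klinear_add: "klinear f \<Longrightarrow> f (v + w) = f v + f w"
  by (simp add: klinear_def)

lemma klinear_smult: "klinear f \<Longrightarrow> f (smult c v) = smult c (f v)"
  by (simp add: klinear_def)

lemma klinear_zero: "klinear f \<Longrightarrow> f 0 = 0"
  by (metis klinear_smult smult_zero(2))

lemma klinear_sum: "klinear f \<Longrightarrow> f (sum g S) = (\<Sum>i\<in>S. f (g i))"
  by (induction S rule: infinite_finite_induct) (simp_all add: klinear_zero klinear_add)

lemma klinear_id [simp]: "klinear id"
  by (simp_all add: klinear_def)

text \<open>Instantiating induction rules eta-expands \<open>id\<close>; this folds the result back.\<close>

lemma ident_eq_id [simp]: "(\<lambda>x. x) = id"
  by (simp add: id_def)

lemma klinear_comp: "klinear f \<Longrightarrow> klinear g \<Longrightarrow> klinear (\<lambda>x. f (g x))"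
  by (simp add: klinear_def)

lemma sum_bas_eq: "(\<Sum>i\<in>Poly_Mapping.keys v. smult (Poly_Mapping.lookup v i) (bas i)) = v"
proof (rule poly_mapping_eqI)
  fix k
  have "(\<Sum>i\<in>Poly_Mapping.keys v. Poly_Mapping.lookup v i * (if i = k then 1 else 0))
      = (\<Sum>i\<in>Poly_Mapping.keys v. if i = k then Poly_Mapping.lookup v i else 0)"
    by (rule sum.cong) auto
  then show "Poly_Mapping.lookup (\<Sum>i\<in>Poly_Mapping.keys v. smult (Poly_Mapping.lookup v i) (bas i)) k
      = Poly_Mapping.lookup v k"
    by (simp add: lookup_sum lookup_bas sum.delta in_keys_iff)
qed

lemma klinear_eq_lin: "klinear f \<Longrightarrow> f v = lin (\<lambda>i. f (bas i)) v"
  by (subst (1) sum_bas_eq[of v, symmetric]) (simp add: klinear_sum klinear_smult lin_def)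

lemma klinear_eqI:
  assumes "klinear f" "klinear g" "\<And>i. f (bas i) = g (bas i)"
  shows "f v = g v"
proof -
  have "f v = lin (\<lambda>i. f (bas i)) v" by (rule klinear_eq_lin[OF assms(1)])
  also have "\<dots> = lin (\<lambda>i. g (bas i)) v" using assms(3) by simp
  also have "\<dots> = g v" by (rule klinear_eq_lin[OF assms(2), symmetric])
  finally show ?thesis .
qed

section \<open>Tensor products\<close>

lemma lookup_tens:
  "Poly_Mapping.lookup (tens v w) (i, j) = Poly_Mapping.lookup v i * Poly_Mapping.lookup w j"
proof -
  have inner: "(\<Sum>b\<in>Poly_Mapping.keys w. Poly_Mapping.lookup v a * Poly_Mapping.lookup w b when a = i \<and> b = j)
      = (if a = i then Poly_Mapping.lookup v a * Poly_Mapping.lookup w j else 0)" for a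
  proof -
    have "(\<Sum>b\<in>Poly_Mapping.keys w. Poly_Mapping.lookup v a * Poly_Mapping.lookup w b when a = i \<and> b = j)
        = (\<Sum>b\<in>Poly_Mapping.keys w. if b = j then (if a = i then Poly_Mapping.lookup v a * Poly_Mapping.lookup w b else 0) else 0)"
      by (rule sum.cong) (auto simp: when_def)
    then show ?thesis by (simp add: sum.delta in_keys_iff)
  qed
  show ?thesis
    by (simp add: tens_def lookup_sum lookup_single inner sum.delta in_keys_iff)
qed

lemma lookup_relabel:
  assumes "inj \<sigma>" "\<sigma> (\<tau> q) = q"
  shows "Poly_Mapping.lookup (relabel \<sigma> v) q = Poly_Mapping.lookup v (\<tau> q)"
proof -
  have "Poly_Mapping.lookup (relabel \<sigma> v) q
      = (\<Sum>b\<in>Poly_Mapping.keys v. Poly_Mapping.lookup v b * (if \<sigma> b = q then 1 else 0))"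
    by (simp add: relabel_def lin_def lookup_sum lookup_bas eq_commute)
  also have "\<dots> = (\<Sum>b\<in>Poly_Mapping.keys v. if b = \<tau> q then Poly_Mapping.lookup v b else 0)"
    by (rule sum.cong) (use assms in \<open>auto simp: inj_eq[symmetric]\<close>)
  finally show ?thesis by (simp add: sum.delta in_keys_iff)
qed

lemma lookup_assoc_r: "Poly_Mapping.lookup (assoc_r v) (a, b, c) = Poly_Mapping.lookup v ((a, b), c)"
  unfolding assoc_r_def by (rule lookup_relabel) (auto simp: inj_def)

lemma lookup_assoc_l: "Poly_Mapping.lookup (assoc_l v) ((a, b), c) = Poly_Mapping.lookup v (a, b, c)"
  unfolding assoc_l_def by (rule lookup_relabel) (auto simp: inj_def)

lemma lookup_swap_middle:
  "Poly_Mapping.lookup (relabel (\<lambda>((a, b), (c, d)). ((a, c), (b, d))) v) ((a, c), (b, d))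
     = Poly_Mapping.lookup v ((a, b), (c, d))"
  by (rule lookup_relabel) (auto simp: inj_def)

lemma poly_mapping_eq_pairI:
  "(\<And>i j. Poly_Mapping.lookup v (i, j) = Poly_Mapping.lookup w (i, j)) \<Longrightarrow> v = w"
  by (rule poly_mapping_eqI) auto

lemma tens_add_left: "tens (v + v') w = tens v w + tens v' w"
  and tens_add_right: "tens v (w + w') = tens v w + tens v w'"
  and tens_smult_left: "tens (smult c v) w = smult c (tens v w)"
  and tens_smult_right: "tens v (smult c w) = smult c (tens v w)"
  by (rule poly_mapping_eq_pairI, simp add: lookup_tens lookup_add algebra_simps)+

lemma tens_bas: "tens (bas i) (bas j) = bas (i, j)"
  by (rule poly_mapping_eq_pairI) (auto simp: lookup_tens lookup_bas)

lemma assoc_r_tens [simp]: "assoc_r (tens (tens u v) w) = tens u (tens v w)"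
  by (rule poly_mapping_eq_pairI, case_tac j) (simp add: lookup_tens lookup_assoc_r)

lemma assoc_l_tens [simp]: "assoc_l (tens u (tens v w)) = tens (tens u v) w"
  by (rule poly_mapping_eq_pairI, case_tac i) (simp add: lookup_tens lookup_assoc_l)

lemma assoc_r_assoc_l [simp]: "assoc_r (assoc_l v) = v"
  by (rule poly_mapping_eq_pairI, case_tac j) (simp add: lookup_assoc_l lookup_assoc_r)

lemma assoc_l_assoc_r [simp]: "assoc_l (assoc_r v) = v"
  by (rule poly_mapping_eq_pairI, case_tac i) (simp add: lookup_assoc_l lookup_assoc_r)

lemma swap_middle_tens [simp]:
  "relabel (\<lambda>((a, b), (c, d)). ((a, c), (b, d))) (tens (tens a b) (tens c d))
     = tens (tens a c) (tens b d)"
  by (rule poly_mapping_eq_pairI, case_tac i, case_tac j) (simp add: lookup_tens lookup_swap_middle)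

lemma klinear_tmap [simp]: "klinear (tmap f g)"
  and klinear_relabel [simp]: "klinear (relabel \<sigma>)"
  and klinear_assoc_r [simp]: "klinear assoc_r"
  and klinear_assoc_l [simp]: "klinear assoc_l"
  and klinear_tmap_r [simp]: "klinear (tmap_r f e)"
  and klinear_Tmap [simp]: "klinear (Tmap mA mY uY \<rho>)"
  by (simp_all add: tmap_def relabel_def assoc_r_def assoc_l_def tmap_r_def Tmap_def)

lemmas linear_simps =
  klinear_add[OF klinear_tmap] klinear_smult[OF klinear_tmap]
  klinear_add[OF klinear_relabel] klinear_smult[OF klinear_relabel]
  klinear_add[OF klinear_assoc_r] klinear_smult[OF klinear_assoc_r]
  klinear_add[OF klinear_assoc_l] klinear_smult[OF klinear_assoc_l]
  klinear_add[OF klinear_tmap_r] klinear_smult[OF klinear_tmap_r]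
  klinear_add[OF klinear_Tmap] klinear_smult[OF klinear_Tmap]
  tens_add_left tens_add_right tens_smult_left tens_smult_right smult_add

lemma tensor_induct [case_names tens add smult]:
  assumes tens: "\<And>v w. P (tens v w)"
    and add: "\<And>x y. P x \<Longrightarrow> P y \<Longrightarrow> P (x + y)"
    and smult: "\<And>c x. P x \<Longrightarrow> P (smult c x)"
  shows "P x"
proof -
  have zero: "P 0"
    using smult[OF tens, of 0] by simp
  have "P (\<Sum>p\<in>S. smult (Poly_Mapping.lookup x p) (bas p))" if "finite S" for S
    using that
  proof (induction S rule: finite_induct)
    case (insert p S)
    then show ?case
      using add smult tens[of "bas (fst p)" "bas (snd p)"] by (simp add: tens_bas)
  qed (simp add: zero)
  then show ?thesis
    by (metis finite_keys sum_bas_eq)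
qed

lemma tmap_bas: "tmap f g (bas (i, j)) = tens (f (bas i)) (g (bas j))"
  by (simp add: tmap_def)

lemma tmap_tens:
  assumes "klinear f" "klinear g"
  shows "tmap f g (tens v w) = tens (f v) (g w)"
proof -
  have on_bas: "tmap f g (tens (bas i) w) = tens (f (bas i)) (g w)" for i
    by (rule klinear_eqI[where f = "\<lambda>w. tmap f g (tens (bas i) w)"])
       (use assms(2) in \<open>simp_all add: klinear_def linear_simps tens_bas tmap_bas\<close>)
  show ?thesis
    by (rule klinear_eqI[where f = "\<lambda>v. tmap f g (tens v w)"])
       (use assms(1) on_bas in \<open>simp_all add: klinear_def linear_simps\<close>)
qed

lemma tmap_comp:
  assumes "klinear f" "klinear g"
  shows "tmap f g (tmap f' g' x) = tmap (f \<circ> f') (g \<circ> g') x"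
proof (rule klinear_eqI[where f = "\<lambda>x. tmap f g (tmap f' g' x)"])
  show "klinear (\<lambda>x. tmap f g (tmap f' g' x))"
    by (simp add: klinear_def linear_simps)
  fix p
  show "tmap f g (tmap f' g' (bas p)) = tmap (f \<circ> f') (g \<circ> g') (bas p)"
    by (cases p) (simp add: tmap_bas tmap_tens assms)
qed simp

lemma tmap_id_id [simp]: "tmap id id = id"
proof
  fix x :: "'a \<times> 'b \<Rightarrow>\<^sub>0 'k::field"
  show "tmap id id x = id x"
  proof (rule klinear_eqI[where f = "tmap id id" and g = id])
    fix p :: "'a \<times> 'b"
    show "tmap id id (bas p) = id (bas p)"
      by (cases p) (simp add: tmap_bas tens_bas)
  qed simp_all
qed

lemma tmap_add_left: "tmap (\<lambda>v. f v + f' v) g x = tmap f g x + tmap f' g x"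
proof -
  have "(\<lambda>(i, j). tens (f (bas i) + f' (bas i)) (g (bas j)))
      = (\<lambda>p. (\<lambda>(i, j). tens (f (bas i)) (g (bas j))) p + (\<lambda>(i, j). tens (f' (bas i)) (g (bas j))) p)"
    by (auto simp: tens_add_left)
  then show ?thesis unfolding tmap_def by (simp add: lin_fun_add)
qed

lemma tmap_smult_left: "tmap (\<lambda>v. smult c (f v)) g x = smult c (tmap f g x)"
proof -
  have "(\<lambda>(i, j). tens (smult c (f (bas i))) (g (bas j)))
      = (\<lambda>p. smult c ((\<lambda>(i, j). tens (f (bas i)) (g (bas j))) p))"
    by (auto simp: tens_smult_left)
  then show ?thesis unfolding tmap_def by (simp add: lin_fun_smult)
qed

lemma assoc_r_tmap:
  assumes "klinear f" "klinear g" "klinear h"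
  shows "assoc_r (tmap (tmap f g) h x) = tmap f (tmap g h) (assoc_r x)"
proof (rule klinear_eqI[where f = "\<lambda>x. assoc_r (tmap (tmap f g) h x)"])
  fix p :: "('a \<times> 'd) \<times> 'f"
  obtain i j k where "p = ((i, j), k)" by (metis prod.collapse)
  then show "assoc_r (tmap (tmap f g) h (bas p)) = tmap f (tmap g h) (assoc_r (bas p))"
    by (simp add: tens_bas[symmetric] tmap_tens assms)
qed (simp_all add: klinear_def linear_simps)

lemma assoc_l_tmap:
  assumes "klinear f" "klinear g" "klinear h"
  shows "assoc_l (tmap f (tmap g h) x) = tmap (tmap f g) h (assoc_l x)"
proof (rule klinear_eqI[where f = "\<lambda>x. assoc_l (tmap f (tmap g h) x)"])
  fix p :: "'a \<times> 'd \<times> 'f"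
  obtain i j k where "p = (i, j, k)" by (metis prod.collapse)
  then show "assoc_l (tmap f (tmap g h) (bas p)) = tmap (tmap f g) h (assoc_l (bas p))"
    by (simp add: tens_bas[symmetric] tmap_tens assms)
qed (simp_all add: klinear_def linear_simps)

lemma tmap_assoc_r_tens:
  assumes "klinear f" "klinear g"
  shows "tmap f g (assoc_r (tens w a)) = tmap f (\<lambda>z. g (tens z a)) w"
proof -
  have "klinear (\<lambda>z. g (tens z a))"
    using assms(2) by (simp add: klinear_def tens_add_left tens_smult_left)
  then show ?thesis
    by (induction w rule: tensor_induct) (simp_all add: linear_simps tmap_tens assms)
qed

lemma tmap_r_bas: "tmap_r f e (bas (i, j)) = smult (e (bas j)) (f (bas i))"
  by (simp add: tmap_r_def)

lemma tmap_r_tens: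
  assumes "klinear f" "kfunctional e"
  shows "tmap_r f e (tens v w) = smult (e w) (f v)"
proof -
  have on_bas: "tmap_r f e (tens (bas i) w) = smult (e w) (f (bas i))" for i
    by (rule klinear_eqI[where f = "\<lambda>w. tmap_r f e (tens (bas i) w)"])
       (use assms(2) in \<open>simp_all add: klinear_def kfunctional_def linear_simps tens_bas
          tmap_r_bas smult_add_scalar\<close>)
  show ?thesis
    by (rule klinear_eqI[where f = "\<lambda>v. tmap_r f e (tens v w)"])
       (use assms(1) on_bas in \<open>simp_all add: klinear_def linear_simps mult.commute\<close>)
qed

lemma tmap_r_tmap:
  assumes "klinear f" "kfunctional e"
  shows "tmap_r id e (tmap f id u) = f (tmap_r id e u)"
  by (induction u rule: tensor_induct)
     (simp_all add: linear_simps tmap_tens tmap_r_tens assms klinear_add[OF assms(1)]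
        klinear_smult[OF assms(1)])

lemma mult_AY_tens:
  assumes "klinear m" "klinear m'"
  shows "mult_AY m m' (tens a y) (tens a' y') = tens (m (tens a a')) (m' (tens y y'))"
  unfolding mult_AY_def by (simp add: tmap_tens assms)

lemma mult_AY_add_left: "mult_AY m m' (v + v') w = mult_AY m m' v w + mult_AY m m' v' w"
  and mult_AY_add_right: "mult_AY m m' v (w + w') = mult_AY m m' v w + mult_AY m m' v w'"
  and mult_AY_smult_left: "mult_AY m m' (smult c v) w = smult c (mult_AY m m' v w)"
  and mult_AY_smult_right: "mult_AY m m' v (smult c w) = smult c (mult_AY m m' v w)"
  unfolding mult_AY_def by (simp_all add: linear_simps)

lemma klinear_eq_iff_slices:
  assumes "klinear F" "klinear G"
    and F: "\<And>y a. F (tens y a) = act a (f y)" and G: "\<And>y a. G (tens y a) = act a (g y)"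
    and act_unit: "\<And>v. act u v = v"
  shows "(\<forall>x. F x = G x) \<longleftrightarrow> (\<forall>y. f y = g y)"
proof
  assume "\<forall>x. F x = G x"
  then show "\<forall>y. f y = g y"
    by (metis F G act_unit)
next
  assume fg: "\<forall>y. f y = g y"
  show "\<forall>x. F x = G x"
  proof
    show "F x = G x" for x
      by (induction x rule: tensor_induct) (simp_all add: F G fg klinear_add klinear_smult assms(1,2))
  qed
qed

section \<open>Multiplication operators\<close>

definition right_mult :: "(('a \<times> 'a \<Rightarrow>\<^sub>0 'k::field) \<Rightarrow> ('a \<Rightarrow>\<^sub>0 'k))
    \<Rightarrow> ('a \<Rightarrow>\<^sub>0 'k) \<Rightarrow> ('a \<Rightarrow>\<^sub>0 'k) \<Rightarrow> ('a \<Rightarrow>\<^sub>0 'k)"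
  where "right_mult m a b = m (tens b a)"

definition left_mult :: "(('a \<times> 'a \<Rightarrow>\<^sub>0 'k::field) \<Rightarrow> ('a \<Rightarrow>\<^sub>0 'k))
    \<Rightarrow> ('a \<Rightarrow>\<^sub>0 'k) \<Rightarrow> ('a \<Rightarrow>\<^sub>0 'k) \<Rightarrow> ('a \<Rightarrow>\<^sub>0 'k)"
  where "left_mult m a b = m (tens a b)"

text \<open>\<open>right_mult12 m d p = p (d \<otimes> 1)\<close> in the algebra \<open>A \<otimes> A \<otimes> Y\<close>.\<close>

definition right_mult12 :: "(('a \<times> 'a \<Rightarrow>\<^sub>0 'k::field) \<Rightarrow> ('a \<Rightarrow>\<^sub>0 'k))
    \<Rightarrow> ('a \<times> 'a \<Rightarrow>\<^sub>0 'k) \<Rightarrow> ('a \<times> 'a \<times> 'y \<Rightarrow>\<^sub>0 'k) \<Rightarrow> ('a \<times> 'a \<times> 'y \<Rightarrow>\<^sub>0 'k)"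
  where "right_mult12 m d p = assoc_r (tmap (\<lambda>q. mult_AY m m q d) id (assoc_l p))"

lemma klinear_right_mult [simp]: "klinear m \<Longrightarrow> klinear (right_mult m a)"
  by (simp add: klinear_def right_mult_def linear_simps)

lemma right_mult_add:
    "klinear m \<Longrightarrow> right_mult m (a + a') = (\<lambda>b. right_mult m a b + right_mult m a' b)"
  and right_mult_smult:
    "klinear m \<Longrightarrow> right_mult m (smult c a) = (\<lambda>b. smult c (right_mult m a b))"
  by (simp_all add: fun_eq_iff right_mult_def linear_simps klinear_add klinear_smult)

lemma klinear_left_mult [simp]: "klinear m \<Longrightarrow> klinear (left_mult m a)"
  by (simp add: klinear_def left_mult_def linear_simps)

lemma klinear_mult_AY_left [simp]: "klinear (\<lambda>q. mult_AY m m' q d)"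
  by (simp add: klinear_def mult_AY_add_left mult_AY_smult_left)

lemma klinear_right_mult12 [simp]: "klinear (right_mult12 m d)"
  by (simp add: klinear_def right_mult12_def linear_simps)

lemma klinear_right_mult12_left [simp]: "klinear (\<lambda>d. right_mult12 m d p)"
  by (simp add: klinear_def right_mult12_def linear_simps mult_AY_add_right mult_AY_smult_right
      tmap_add_left tmap_smult_left)

lemma mult_AY_tens_right:
  assumes "klinear m"
  shows "mult_AY m m q (tens d1 d2) = tmap (right_mult m d1) (right_mult m d2) q"
  by (induction q rule: tensor_induct)
     (simp_all add: linear_simps mult_AY_add_left mult_AY_smult_left mult_AY_tens tmap_tens assms,
      simp add: right_mult_def)

lemma right_mult12_tens:
  assumes "klinear m"
  shows "right_mult12 m (tens d1 d2) p = tmap (right_mult m d1) (tmap (right_mult m d2) id) p"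
  using assms by (simp add: right_mult12_def mult_AY_tens_right assoc_r_tmap)

lemma assoc_r_tens_right_mult:
  assumes "klinear m"
  shows "assoc_r (tens (tmap (right_mult m b) id v) z)
    = tmap m id (relabel (\<lambda>((a, b), (c, d)). ((a, c), (b, d))) (tens v (tens b z)))"
  by (induction v rule: tensor_induct) (simp_all add: linear_simps tmap_tens assms, simp add: right_mult_def)

section \<open>The map \<open>T\<close>\<close>

locale comodule_coalgebra_data =
  fixes mA :: "('a \<times> 'a \<Rightarrow>\<^sub>0 'k::field) \<Rightarrow> ('a \<Rightarrow>\<^sub>0 'k)"
    and uA :: "'a \<Rightarrow>\<^sub>0 'k"
    and DA :: "('a \<Rightarrow>\<^sub>0 'k) \<Rightarrow> ('a \<times> 'a \<Rightarrow>\<^sub>0 'k)"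
    and mY :: "('y \<times> 'y \<Rightarrow>\<^sub>0 'k) \<Rightarrow> ('y \<Rightarrow>\<^sub>0 'k)"
    and uY :: "'y \<Rightarrow>\<^sub>0 'k"
    and DY :: "('y \<Rightarrow>\<^sub>0 'k) \<Rightarrow> ('y \<times> 'y \<Rightarrow>\<^sub>0 'k)"
    and eY :: "('y \<Rightarrow>\<^sub>0 'k) \<Rightarrow> 'k"
    and \<rho> :: "('y \<Rightarrow>\<^sub>0 'k) \<Rightarrow> ('a \<times> 'y \<Rightarrow>\<^sub>0 'k)"
  assumes mA_linear [simp]: "klinear mA"
    and mA_assoc: "mA (tens (mA (tens a b)) c) = mA (tens a (mA (tens b c)))"
    and mA_unit_right: "mA (tens a uA) = a"
    and DA_linear [simp]: "klinear DA"
    and DA_mult: "DA (mA (tens a b)) = mult_AY mA mA (DA a) (DA b)"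
    and DA_unit: "DA uA = tens uA uA"
    and mY_linear [simp]: "klinear mY"
    and mY_unit_right: "mY (tens y uY) = y"
    and DY_linear [simp]: "klinear DY"
    and eY_functional: "kfunctional eY"
    and rho_linear [simp]: "klinear \<rho>"
begin

lemmas linear_simps_data = linear_simps
  klinear_add[OF mA_linear] klinear_smult[OF mA_linear]
  klinear_add[OF DA_linear] klinear_smult[OF DA_linear]
  klinear_add[OF mY_linear] klinear_smult[OF mY_linear]
  klinear_add[OF DY_linear] klinear_smult[OF DY_linear]
  klinear_add[OF rho_linear] klinear_smult[OF rho_linear]
  mult_AY_add_left mult_AY_add_right mult_AY_smult_left mult_AY_smult_right
  tmap_add_left tmap_smult_left

abbreviation T :: "('y \<times> 'a \<Rightarrow>\<^sub>0 'k) \<Rightarrow> ('a \<times> 'y \<Rightarrow>\<^sub>0 'k)"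
  where "T \<equiv> Tmap mA mY uY \<rho>"

abbreviation R :: "('a \<Rightarrow>\<^sub>0 'k) \<Rightarrow> ('a \<Rightarrow>\<^sub>0 'k) \<Rightarrow> ('a \<Rightarrow>\<^sub>0 'k)"
  where "R \<equiv> right_mult mA"

lemma right_mult_unit [simp]: "R uA = id"
  by (simp add: fun_eq_iff right_mult_def mA_unit_right)

lemma right_mult_comp: "R a \<circ> R b = R (mA (tens b a))"
  by (simp add: fun_eq_iff right_mult_def mA_assoc)

lemma left_mult_right_mult_comm: "left_mult mA e \<circ> R d = R d \<circ> left_mult mA e"
  by (simp add: fun_eq_iff left_mult_def right_mult_def mA_assoc)

lemma DA_right_mult: "DA \<circ> R a = (\<lambda>q. mult_AY mA mA q (DA a)) \<circ> DA"
  by (simp add: fun_eq_iff right_mult_def DA_mult)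

lemma mult_AY_unit_right: "mult_AY mA mY w (tens a uY) = tmap (R a) id w"
  by (induction w rule: tensor_induct)
     (simp_all add: linear_simps_data mult_AY_tens tmap_tens mY_unit_right, simp add: right_mult_def)

lemma Tmap_tens: "T (tens y a) = tmap (R a) id (\<rho> y)"
proof -
  have on_bas: "T (tens (bas j) (bas i)) = tmap (R (bas i)) id (\<rho> (bas j))" for i j
    by (simp add: Tmap_def tens_bas mult_AY_unit_right)
  have "T (tens (bas j) a) = tmap (R a) id (\<rho> (bas j))" for j
    by (rule klinear_eqI[where f = "\<lambda>a. T (tens (bas j) a)"])
       (simp_all add: on_bas klinear_def linear_simps_data right_mult_add right_mult_smult)
  then show ?thesis
    by (rule_tac klinear_eqI[where f = "\<lambda>y. T (tens y a)"])
       (simp_all add: klinear_def linear_simps_data)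
qed

lemma Tmap_right_mult: "T \<circ> tmap id (R a) = tmap (R a) id \<circ> T"
proof
  show "(T \<circ> tmap id (R a)) x = (tmap (R a) id \<circ> T) x" for x
  proof (induction x rule: tensor_induct)
    case (tens y b)
    have "T (tmap id (R a) (tens y b)) = tmap (R (mA (tens b a))) id (\<rho> y)"
      by (simp add: tmap_tens Tmap_tens right_mult_def)
    also have "\<dots> = tmap (R a) id (T (tens y b))"
      by (simp add: Tmap_tens tmap_comp right_mult_comp)
    finally show ?case by simp
  qed (simp_all add: linear_simps)
qed

lemma Tmap_leg1_tens:
  "assoc_r (tmap T id (assoc_l (tens y u)))
     = tmap mA id (relabel (\<lambda>((a, b), (c, d)). ((a, c), (b, d))) (tens (\<rho> y) u))"
  by (induction u rule: tensor_induct)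
     (simp_all add: linear_simps tmap_tens Tmap_tens assoc_r_tens_right_mult)

lemma Tmap_leg1_tmap_rho:
  "assoc_r (tmap T id (assoc_l (tmap id \<rho> w)))
     = tmap mA id (relabel (\<lambda>((a, b), (c, d)). ((a, c), (b, d))) (tmap \<rho> \<rho> w))"
  by (induction w rule: tensor_induct)
     (simp_all add: linear_simps tmap_tens Tmap_leg1_tens)

lemma comult_lhs_tens: "tmap id DY (T (tens y a)) = tmap (R a) id (tmap id DY (\<rho> y))"
  by (simp add: Tmap_tens tmap_comp)

lemma comult_rhs_tens:
  "assoc_r (tmap T id (assoc_l (tmap id T (assoc_r (tmap DY id (tens y a))))))
     = tmap (R a) id (tmap mA id (relabel (\<lambda>((a, b), (c, d)). ((a, c), (b, d))) (tmap \<rho> \<rho> (DY y))))"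
    (is "?lhs = _")
proof -
  have "?lhs = assoc_r (tmap T id (assoc_l (tmap id (\<lambda>z. T (tens z a)) (DY y))))"
    by (simp add: tmap_tens tmap_assoc_r_tens)
  also have "\<dots> = assoc_r (tmap T id (assoc_l (tmap id (tmap (R a) id) (tmap id \<rho> (DY y)))))"
    by (simp add: Tmap_tens tmap_comp comp_def)
  also have "\<dots> = assoc_r (tmap (T \<circ> tmap id (R a)) id (assoc_l (tmap id \<rho> (DY y))))"
    by (subst assoc_l_tmap) (simp_all add: tmap_comp)
  also have "\<dots> = assoc_r (tmap (tmap (R a) id) id (tmap T id (assoc_l (tmap id \<rho> (DY y)))))"
    by (simp add: Tmap_right_mult tmap_comp)
  also have "\<dots> = tmap (R a) id (assoc_r (tmap T id (assoc_l (tmap id \<rho> (DY y)))))"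
    by (simp add: assoc_r_tmap)
  finally show ?thesis
    by (simp add: Tmap_leg1_tmap_rho)
qed

lemma comult_condition_iff:
  "(\<forall>x. tmap id DY (T x) = assoc_r (tmap T id (assoc_l (tmap id T (assoc_r (tmap DY id x))))))
   \<longleftrightarrow> (\<forall>y. tmap id DY (\<rho> y)
          = tmap mA id (relabel (\<lambda>((a, b), (c, d)). ((a, c), (b, d))) (tmap \<rho> \<rho> (DY y))))"
  by (rule klinear_eq_iff_slices[where act = "\<lambda>a. tmap (R a) id" and u = uA])
     (simp_all add: comult_lhs_tens comult_rhs_tens klinear_def linear_simps)

lemma right_mult12_unit [simp]: "right_mult12 mA (tens uA uA) p = p"
  by (simp add: right_mult12_tens)

lemma Tmap_Tmap_tens:
  "tmap id T (assoc_r (tmap T id (assoc_l (tens y d)))) = right_mult12 mA d (tmap id \<rho> (\<rho> y))"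
proof (induction d rule: tensor_induct)
  case (tens d1 d2)
  have "tmap id T (assoc_r (tmap T id (assoc_l (tens y (tens d1 d2)))))
      = tmap id T (assoc_r (tmap (tmap (R d1) id) id (tens (\<rho> y) d2)))"
    by (simp add: tmap_tens Tmap_tens)
  also have "\<dots> = tmap id T (tmap (R d1) id (assoc_r (tens (\<rho> y) d2)))"
    by (simp add: assoc_r_tmap)
  also have "\<dots> = tmap (R d1) (\<lambda>z. T (tens z d2)) (\<rho> y)"
    by (simp add: tmap_comp tmap_assoc_r_tens comp_def)
  also have "\<dots> = right_mult12 mA (tens d1 d2) (tmap id \<rho> (\<rho> y))"
    by (simp add: right_mult12_tens tmap_comp Tmap_tens comp_def)
  finally show ?case .
qed (simp_all add: linear_simps klinear_add[OF klinear_right_mult12_left] klinear_smult[OF klinear_right_mult12_left])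

lemma counit_Tmap: "(\<lambda>v. tmap_r id eY (T v)) = mA \<circ> tmap (\<lambda>v. tmap_r id eY (\<rho> v)) id"
proof
  have "klinear (\<lambda>v. tmap_r id eY (\<rho> v))"
    by (simp add: klinear_def linear_simps_data)
  then show "tmap_r id eY (T x) = (mA \<circ> tmap (\<lambda>v. tmap_r id eY (\<rho> v)) id) x" for x
    by (induction x rule: tensor_induct)
       (simp_all add: linear_simps_data Tmap_tens tmap_r_tmap eY_functional tmap_tens right_mult_def)
qed

lemma comult_Tmap_tens:
  "assoc_r (tmap DA id (T (tens y a))) = right_mult12 mA (DA a) (assoc_r (tmap DA id (\<rho> y)))"
  by (simp add: Tmap_tens tmap_comp DA_right_mult right_mult12_def)

lemma mult_leg1_tens: "tmap mA id (assoc_l (tens e p)) = tmap (left_mult mA e) id p"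
  by (induction p rule: tensor_induct) (simp_all add: linear_simps tmap_tens, simp add: left_mult_def)

lemma mult_leg1_right_mult12:
  "tmap mA id (assoc_l (tmap id (right_mult12 mA d) X)) = right_mult12 mA d (tmap mA id (assoc_l X))"
proof (induction X rule: tensor_induct)
  case (tens e p)
  have "tmap mA id (assoc_l (tens e (right_mult12 mA d p)))
      = right_mult12 mA d (tmap mA id (assoc_l (tens e p)))"
  proof (induction d rule: tensor_induct)
    case (tens d1 d2)
    show ?case
      by (simp add: tmap_tens right_mult12_tens mult_leg1_tens tmap_comp left_mult_right_mult_comm)
  qed (simp_all add: linear_simps klinear_add[OF klinear_right_mult12_left]
         klinear_smult[OF klinear_right_mult12_left])
  then show ?case
    by (simp add: tmap_tens)
qed (simp_all add: linear_simps klinear_add[OF klinear_right_mult12] klinear_smult[OF klinear_right_mult12])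

lemma coassoc_rhs_tens:
  "tmap (\<lambda>v. tmap_r id eY (T v)) id
      (assoc_l (tmap id (\<lambda>v. assoc_r (tmap DA id (T v))) (assoc_r (tmap DY id (tens y a)))))
   = right_mult12 mA (DA a) (tmap mA id (assoc_l
      (tmap (\<lambda>v. tmap_r id eY (\<rho> v)) (\<lambda>v. assoc_r (tmap DA id (\<rho> v))) (DY y))))"
    (is "?lhs = right_mult12 mA (DA a) (tmap mA id (assoc_l (tmap ?E ?F (DY y))))")
proof -
  have E_linear: "klinear ?E"
    by (rule klinear_comp[OF klinear_tmap_r rho_linear])
  have F_linear: "klinear ?F"
    by (rule klinear_comp[OF klinear_assoc_r klinear_comp[OF klinear_tmap rho_linear]])
  have "klinear (\<lambda>v. assoc_r (tmap DA id (T v)))"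
    by (rule klinear_comp[OF klinear_assoc_r klinear_comp[OF klinear_tmap klinear_Tmap]])
  then have "?lhs = tmap (mA \<circ> tmap ?E id) id
      (assoc_l (tmap id (right_mult12 mA (DA a)) (tmap id ?F (DY y))))"
    by (simp add: tmap_tens tmap_assoc_r_tens counit_Tmap comult_Tmap_tens tmap_comp comp_def)
  also have "\<dots> = tmap mA id (tmap (tmap ?E id) id
      (assoc_l (tmap id (right_mult12 mA (DA a)) (tmap id ?F (DY y)))))"
    by (simp add: tmap_comp)
  also have "\<dots> = tmap mA id (assoc_l (tmap ?E id
      (tmap id (right_mult12 mA (DA a)) (tmap id ?F (DY y)))))"
    by (simp only: assoc_l_tmap[OF E_linear klinear_id klinear_id, unfolded tmap_id_id])
  also have "\<dots> = tmap mA id (assoc_l (tmap id (right_mult12 mA (DA a)) (tmap ?E ?F (DY y))))"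
    by (simp add: tmap_comp E_linear)
  also have "\<dots> = right_mult12 mA (DA a) (tmap mA id (assoc_l (tmap ?E ?F (DY y))))"
    by (rule mult_leg1_right_mult12)
  finally show ?thesis .
qed

lemma coassoc_lhs_tens:
  "tmap id T (assoc_r (tmap T id (assoc_l (tmap id DA (tens y a)))))
     = right_mult12 mA (DA a) (tmap id \<rho> (\<rho> y))"
  by (simp add: tmap_tens Tmap_Tmap_tens)

lemma coassoc_condition_iff:
  "(\<forall>x. tmap id T (assoc_r (tmap T id (assoc_l (tmap id DA x)))) =
        tmap (\<lambda>v. tmap_r id eY (T v)) id
          (assoc_l (tmap id (\<lambda>v. assoc_r (tmap DA id (T v))) (assoc_r (tmap DY id x)))))
   \<longleftrightarrow> (\<forall>y. tmap id \<rho> (\<rho> y) = tmap mA id (assoc_l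
          (tmap (\<lambda>v. tmap_r id eY (\<rho> v)) (\<lambda>v. assoc_r (tmap DA id (\<rho> v))) (DY y))))"
  by (rule klinear_eq_iff_slices[where act = "\<lambda>a. right_mult12 mA (DA a)" and u = uA])
     (simp_all add: coassoc_lhs_tens coassoc_rhs_tens DA_unit klinear_def linear_simps)

end

lemma comodule_coalgebra_data_if_hopf_algebras:
  assumes "hopf_algebra mA uA DA eA SA" "hopf_algebra mY uY DY eY SY" "klinear \<rho>"
  shows "comodule_coalgebra_data mA uA DA mY uY DY eY \<rho>"
proof
  have "mA (tmap mA id (tens (tens a b) c)) = mA (tmap id mA (assoc_r (tens (tens a b) c)))" for a b c
    using assms(1) by (simp add: hopf_algebra_def)
  then show "mA (tens (mA (tens a b)) c) = mA (tens a (mA (tens b c)))" for a b c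
    using assms(1) by (simp add: hopf_algebra_def tmap_tens)
qed (use assms in \<open>simp_all add: hopf_algebra_def mult_AY_def\<close>)

theorem proposition3p8:
  fixes mA :: "('a \<times> 'a \<Rightarrow>\<^sub>0 'k::field) \<Rightarrow> ('a \<Rightarrow>\<^sub>0 'k)"
    and uA :: "'a \<Rightarrow>\<^sub>0 'k"
    and DA :: "('a \<Rightarrow>\<^sub>0 'k) \<Rightarrow> ('a \<times> 'a \<Rightarrow>\<^sub>0 'k)"
    and eA :: "('a \<Rightarrow>\<^sub>0 'k) \<Rightarrow> 'k"
    and SA :: "('a \<Rightarrow>\<^sub>0 'k) \<Rightarrow> ('a \<Rightarrow>\<^sub>0 'k)"
    and mY :: "('y \<times> 'y \<Rightarrow>\<^sub>0 'k) \<Rightarrow> ('y \<Rightarrow>\<^sub>0 'k)"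
    and uY :: "'y \<Rightarrow>\<^sub>0 'k"
    and DY :: "('y \<Rightarrow>\<^sub>0 'k) \<Rightarrow> ('y \<times> 'y \<Rightarrow>\<^sub>0 'k)"
    and eY :: "('y \<Rightarrow>\<^sub>0 'k) \<Rightarrow> 'k"
    and SY :: "('y \<Rightarrow>\<^sub>0 'k) \<Rightarrow> ('y \<Rightarrow>\<^sub>0 'k)"
    and \<rho> :: "('y \<Rightarrow>\<^sub>0 'k) \<Rightarrow> ('a \<times> 'y \<Rightarrow>\<^sub>0 'k)"
  assumes "hopf_algebra mA uA DA eA SA"
    and "hopf_algebra mY uY DY eY SY"
    and "klinear \<rho>"
  shows "partial_comodule_coalgebra_hopf mA DA eA DY eY \<rho> \<longleftrightarrow>
         partial_comodule_coalgebra_mult mA uA DA eA mY uY DY eY \<rho>"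
proof -
  interpret comodule_coalgebra_data mA uA DA mY uY DY eY \<rho>
    using assms by (rule comodule_coalgebra_data_if_hopf_algebras)
  show ?thesis
    unfolding partial_comodule_coalgebra_hopf_def partial_comodule_coalgebra_mult_def Let_def
    using comult_condition_iff coassoc_condition_iff by simp
qed

end
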